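(* Let $V\subseteq\mathcal V$ be finite, $\mathcal E,\mathcal F\in\mathit{DProg}(V)$, and $V'\subseteq\mathcal V$ with $|V'|=|V|$ and $V\cap V'=\emptyset$. Then (1) $\mathcal E\le_T^e\mathcal F$ iff $\mathcal F\models_{tot}(\mathcal E^\dagger(\Omega_{V,V'}),\Omega_{V,V'})$; (2) $\mathcal E\le_P^e\mathcal F$ iff $\mathcal F\models_{par}(I-\mathcal E^\dagger(\Omega_{V,V'}),\,I-\Omega_{V,V'})$.
   Context: $\mathcal V$ is a countably infinite set of qubit variables; $\mathcal H_V=\bigotimes_{q\in V}\mathcal H_q$ for finite $V$. $\mathcal D(\mathcal H)$: partial density operators; $\mathcal P(\mathcal H)$: effects; $\mathit{DProg}(V)$: completely positive trace-nonincreasing super-operators on $\mathcal L(\mathcal H_V)$. $\mathcal E^\dagger$ is the adjoint of $\mathcal E$: ${\rm tr}(\mathcal E(A)B)={\rm tr}(A\mathcal E^\dagger(B))$ for all $A,B$. Operators/super-operators on subsystems are implicitly extended by tensoring with identities. With $d=2^{|V|}$ and orthonormal bases $\{|i\rangle_V\}$, $\{|i\rangle_{V'}\}$, $\Omega_{V,V'}=|\omega\rangle\langle\omega|$ where $|\omega\rangle=\frac1{\sqrt d}\sum_{i=0}^{d-1}|i\rangle_V|i\rangle_{V'}$, and $I$ is the identity on $\mathcal H_V\otimes\mathcal H_{V'}$. (In the paper's notation, $\mathcal E^\dagger(N)=wp.\mathcal E.N$ and $I-\mathcal E^\dagger(I-N)=wlp.\mathcal E.N$, so the specification in (2) is $(wlp.\mathcal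 E.(I-\Omega),I-\Omega)$.) For finite $W$ and $M,N\in\mathcal P(\mathcal H_W)$, $\mathcal E\models_{tot}(M,N)$ iff for all finite $X\supseteq V\cup W$ and $\rho\in\mathcal D(\mathcal H_X)$, ${\rm tr}(M\rho)\le{\rm tr}(N\mathcal E(\rho))$; $\mathcal E\models_{par}(M,N)$ iff for all such $X,\rho$, ${\rm tr}(M\rho)\le{\rm tr}(N\mathcal E(\rho))+{\rm tr}(\rho)-{\rm tr}(\mathcal E(\rho))$. $\mathcal E\le_T^e\mathcal F$ (resp. $\le_P^e$) iff for every finite $W$ and $M,N\in\mathcal P(\mathcal H_W)$, $\mathcal E\models_{tot}(M,N)\Rightarrow\mathcal F\models_{tot}(M,N)$ (resp. with $\models_{par}$). *)

theory Defs
  imports Complex_Main "HOL-Library.Complex_Order"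
begin

text \<open>A computational basis state of the register X is an assignment
  s :: nat => bool that is False outside X.  An operator on H_X is a
  matrix indexed by such assignments; entries outside the register are 0.\<close>

type_synonym asgn = "nat \<Rightarrow> bool"
type_synonym op = "asgn \<Rightarrow> asgn \<Rightarrow> complex"
type_synonym vec = "asgn \<Rightarrow> complex"

definition asg :: "nat set \<Rightarrow> asgn set" where
  "asg X = {s. \<forall>q. q \<notin> X \<longrightarrow> \<not> s q}"

definition restr :: "nat set \<Rightarrow> asgn \<Rightarrow> asgn" where
  "restr X s = (\<lambda>q. q \<in> X \<and> s q)"

definition ops :: "nat set \<Rightarrow> op set" where
  "ops X = {A. \<forall>s t. (s \<notin> asg X \<or> t \<notin> asg X) \<longrightarrow> A s t = 0}"

definition tr :: "nat set \<Rightarrow> op \<Rightarrow> complex" where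
  "tr X A = (\<Sum>s\<in>asg X. A s s)"

definition mult :: "nat set \<Rightarrow> op \<Rightarrow> op \<Rightarrow> op" where
  "mult X A B = (\<lambda>s t. \<Sum>u\<in>asg X. A s u * B u t)"

definition idop :: "nat set \<Rightarrow> op" where
  "idop X = (\<lambda>s t. if s \<in> asg X \<and> s = t then 1 else 0)"

definition minus_op :: "op \<Rightarrow> op \<Rightarrow> op" where
  "minus_op A B = (\<lambda>s t. A s t - B s t)"

definition psd :: "nat set \<Rightarrow> op \<Rightarrow> bool" where
  "psd X A \<longleftrightarrow> A \<in> ops X \<and>
     (\<forall>\<psi> :: vec. 0 \<le> (\<Sum>s\<in>asg X. \<Sum>t\<in>asg X. cnj (\<psi> s) * A s t * \<psi> t))"

definition dens :: "nat set \<Rightarrow> op set" where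
  "dens X = {\<rho>. psd X \<rho> \<and> Re (tr X \<rho>) \<le> 1}"

definition effects :: "nat set \<Rightarrow> op set" where
  "effects X = {M. psd X M \<and> psd X (minus_op (idop X) M)}"

text \<open>Extension of an operator A on H_W to H_X (W \<subseteq> X): A \<otimes> I_{X-W}.\<close>
definition extOp :: "nat set \<Rightarrow> nat set \<Rightarrow> op \<Rightarrow> op" where
  "extOp X W A = (\<lambda>s t. if s \<in> asg X \<and> t \<in> asg X \<and> (\<forall>q\<in>X - W. s q = t q)
                        then A (restr W s) (restr W t) else 0)"

text \<open>Extension of a super-operator E on L(H_V) to L(H_X) (V \<subseteq> X):
  E \<otimes> id_{X-V}, defined blockwise: writing rho = \<Sum>_{a,b} rho_{ab} \<otimes> |a><b|
  with a, b basis states of X-V, the result is \<Sum>_{a,b} E(rho_{ab}) \<otimes> |a><b|.\<close>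
definition block :: "nat set \<Rightarrow> op \<Rightarrow> asgn \<Rightarrow> asgn \<Rightarrow> op" where
  "block V \<rho> a b = (\<lambda>u w. if u \<in> asg V \<and> w \<in> asg V
       then \<rho> (\<lambda>q. if q \<in> V then u q else a q) (\<lambda>q. if q \<in> V then w q else b q) else 0)"

definition extE :: "nat set \<Rightarrow> nat set \<Rightarrow> (op \<Rightarrow> op) \<Rightarrow> op \<Rightarrow> op" where
  "extE X V E \<rho> = (\<lambda>s t. if s \<in> asg X \<and> t \<in> asg X
       then E (block V \<rho> (restr (X - V) s) (restr (X - V) t)) (restr V s) (restr V t)
       else 0)"

text \<open>DProg(V): completely positive, trace-nonincreasing (linear) super-operators on L(H_V).
  Complete positivity: E \<otimes> id is positive for every finite ancilla register.\<close>
definition dprog :: "nat set \<Rightarrow> (op \<Rightarrow> op) \<Rightarrow> bool" where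
  "dprog V E \<longleftrightarrow>
     (\<forall>A\<in>ops V. E A \<in> ops V) \<and>
     (\<forall>A\<in>ops V. \<forall>B\<in>ops V. E (\<lambda>s t. A s t + B s t) = (\<lambda>s t. E A s t + E B s t)) \<and>
     (\<forall>c. \<forall>A\<in>ops V. E (\<lambda>s t. c * A s t) = (\<lambda>s t. c * E A s t)) \<and>
     (\<forall>X. finite X \<and> V \<subseteq> X \<longrightarrow> (\<forall>\<rho>. psd X \<rho> \<longrightarrow> psd X (extE X V E \<rho>))) \<and>
     (\<forall>\<rho>. psd V \<rho> \<longrightarrow> Re (tr V (E \<rho>)) \<le> Re (tr V \<rho>))"

definition adjoint :: "nat set \<Rightarrow> (op \<Rightarrow> op) \<Rightarrow> op \<Rightarrow> op" where
  "adjoint V E = (SOME F. (\<forall>B\<in>ops V. F B \<in> ops V) \<and>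
     (\<forall>A\<in>ops V. \<forall>B\<in>ops V. tr V (mult V (E A) B) = tr V (mult V A (F B))))"

definition sat_tot :: "nat set \<Rightarrow> (op \<Rightarrow> op) \<Rightarrow> nat set \<Rightarrow> op \<Rightarrow> op \<Rightarrow> bool" where
  "sat_tot V E W M N \<longleftrightarrow> (\<forall>X. finite X \<and> V \<union> W \<subseteq> X \<longrightarrow> (\<forall>\<rho>\<in>dens X.
     Re (tr X (mult X (extOp X W M) \<rho>)) \<le> Re (tr X (mult X (extOp X W N) (extE X V E \<rho>)))))"

definition sat_par :: "nat set \<Rightarrow> (op \<Rightarrow> op) \<Rightarrow> nat set \<Rightarrow> op \<Rightarrow> op \<Rightarrow> bool" where
  "sat_par V E W M N \<longleftrightarrow> (\<forall>X. finite X \<and> V \<union> W \<subseteq> X \<longrightarrow> (\<forall>\<rho>\<in>dens X.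
     Re (tr X (mult X (extOp X W M) \<rho>)) \<le>
       Re (tr X (mult X (extOp X W N) (extE X V E \<rho>)))
       + Re (tr X \<rho>) - Re (tr X (extE X V E \<rho>))))"

definition leT :: "nat set \<Rightarrow> (op \<Rightarrow> op) \<Rightarrow> (op \<Rightarrow> op) \<Rightarrow> bool" where
  "leT V E F \<longleftrightarrow> (\<forall>W M N. finite W \<and> M \<in> effects W \<and> N \<in> effects W \<longrightarrow>
     sat_tot V E W M N \<longrightarrow> sat_tot V F W M N)"

definition leP :: "nat set \<Rightarrow> (op \<Rightarrow> op) \<Rightarrow> (op \<Rightarrow> op) \<Rightarrow> bool" where
  "leP V E F \<longleftrightarrow> (\<forall>W M N. finite W \<and> M \<in> effects W \<and> N \<in> effects W \<longrightarrow>
     sat_par V E W M N \<longrightarrow> sat_par V F W M N)"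

definition onb :: "nat set \<Rightarrow> (nat \<Rightarrow> vec) \<Rightarrow> bool" where
  "onb V b \<longleftrightarrow> (\<forall>i<2 ^ card V. \<forall>j<2 ^ card V.
     (\<Sum>s\<in>asg V. cnj (b i s) * b j s) = (if i = j then 1 else 0))"

text \<open>Omega_{V,V'} = |omega><omega| with omega = d^{-1/2} \<Sum>_i |i>_V |i>_{V'}.\<close>
definition omega_vec :: "nat set \<Rightarrow> nat set \<Rightarrow> (nat \<Rightarrow> vec) \<Rightarrow> (nat \<Rightarrow> vec) \<Rightarrow> vec" where
  "omega_vec V V' b1 b2 = (\<lambda>s. if s \<in> asg (V \<union> V')
     then (\<Sum>i<2 ^ card V. b1 i (restr V s) * b2 i (restr V' s)) / complex_of_real (sqrt (2 ^ card V))
     else 0)"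

definition Omega :: "nat set \<Rightarrow> nat set \<Rightarrow> (nat \<Rightarrow> vec) \<Rightarrow> (nat \<Rightarrow> vec) \<Rightarrow> op" where
  "Omega V V' b1 b2 = (\<lambda>s t. omega_vec V V' b1 b2 s * cnj (omega_vec V V' b1 b2 t))"

end

(*
  Write g_D(rho) = tr(Omega (D (x) id)(rho)) for states rho on V u V' and its extensions.
  By the duality tr(E^dagger(N) rho) = tr(N E(rho)), F satisfies (E^dagger(Omega), Omega) totally
  iff g_E <= g_F on all states, and (I - E^dagger(Omega), I - Omega) partially iff g_F <= g_E.
  At rho = |y><y| with y proportional to (G^T (x) I)|omega>, g_D is a positive multiple of the
  Choi form  sum J_D(u,w,p,q) G(p,u) conj(G(q,w)),  so either inequality gives the same
  inequality between the Choi forms of E and F at every G.  Conversely, writing N and rho as sums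
  of rank-one operators (Cholesky), every expectation tr(N (D (x) id)(rho)) is a sum of Choi-form
  values, so the Choi-form inequality transfers to all specifications (M, N): this yields the
  refinements <=_T and <=_P.  The forward directions only need that E^dagger(Omega) is an effect.
*)
theory Submission
  imports Defs
begin

section \<open>Positive forms and rank-one decompositions\<close>

lemma sum_swap_pairs:
  "(\<Sum>a\<in>A. \<Sum>b\<in>B. \<Sum>u\<in>U. \<Sum>w\<in>W. F a b u w) = (\<Sum>u\<in>U. \<Sum>w\<in>W. \<Sum>a\<in>A. \<Sum>b\<in>B. F a b u w)"
proof -
  have "(\<Sum>a\<in>A. \<Sum>b\<in>B. \<Sum>u\<in>U. \<Sum>w\<in>W. F a b u w) = (\<Sum>a\<in>A. \<Sum>u\<in>U. \<Sum>b\<in>B. \<Sum>w\<in>W. F a b u w)"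
    by (rule sum.cong[OF refl], rule sum.swap)
  also have "\<dots> = (\<Sum>a\<in>A. \<Sum>u\<in>U. \<Sum>w\<in>W. \<Sum>b\<in>B. F a b u w)"
    by (rule sum.cong[OF refl], rule sum.cong[OF refl], rule sum.swap)
  also have "\<dots> = (\<Sum>u\<in>U. \<Sum>a\<in>A. \<Sum>w\<in>W. \<Sum>b\<in>B. F a b u w)"
    by (rule sum.swap)
  also have "\<dots> = (\<Sum>u\<in>U. \<Sum>w\<in>W. \<Sum>a\<in>A. \<Sum>b\<in>B. F a b u w)"
    by (rule sum.cong[OF refl], rule sum.swap)
  finally show ?thesis .
qed

definition quad_form :: "'a set \<Rightarrow> ('a \<Rightarrow> 'a \<Rightarrow> complex) \<Rightarrow> ('a \<Rightarrow> complex) \<Rightarrow> complex" where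
  "quad_form S A \<psi> = (\<Sum>s\<in>S. \<Sum>t\<in>S. cnj (\<psi> s) * A s t * \<psi> t)"

definition pos_form :: "'a set \<Rightarrow> ('a \<Rightarrow> 'a \<Rightarrow> complex) \<Rightarrow> bool" where
  "pos_form S A \<longleftrightarrow> (\<forall>\<psi>. 0 \<le> quad_form S A \<psi>)"

lemma quad_form_subset:
  assumes "finite S" "T \<subseteq> S" "\<And>s. s \<notin> T \<Longrightarrow> \<psi> s = 0"
  shows "quad_form S A \<psi> = quad_form T A \<psi>"
proof -
  have shrink: "(\<Sum>s\<in>S. f s) = (\<Sum>s\<in>T. f s)" if "\<And>s. s \<notin> T \<Longrightarrow> f s = 0" for f :: "_ \<Rightarrow> complex"
    using assms(1,2) that by (intro sum.mono_neutral_right) auto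
  show ?thesis
    unfolding quad_form_def using assms(3) by (simp add: shrink)
qed

lemma quad_form_one_point:
  "finite S \<Longrightarrow> s \<in> S \<Longrightarrow> quad_form S A (\<lambda>x. if x = s then a else 0) = cnj a * A s s * a"
  by (subst quad_form_subset[where T = "{s}"]) (auto simp: quad_form_def)

lemma quad_form_two_points:
  assumes "finite S" "s \<in> S" "t \<in> S" "s \<noteq> t"
  shows "quad_form S A (\<lambda>x. if x = s then a else if x = t then b else 0) =
    cnj a * A s s * a + cnj a * A s t * b + cnj b * A t s * a + cnj b * A t t * b"
  using assms by (subst quad_form_subset[where T = "{s, t}"]) (auto simp: quad_form_def)

lemma pos_form_nonneg: "pos_form S A \<Longrightarrow> 0 \<le> quad_form S A \<psi>"
  unfolding pos_form_def by blast

lemma pos_form_diag: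
  assumes "finite S" "pos_form S A" "s \<in> S"
  shows "0 \<le> A s s"
  using pos_form_nonneg[OF assms(2), of "\<lambda>x. if x = s then 1 else 0"]
    quad_form_one_point[OF assms(1,3), of A 1] by simp

lemma pos_form_hermitian:
  assumes "finite S" "pos_form S A" "s \<in> S" "t \<in> S"
  shows "A t s = cnj (A s t)"
proof (cases "s = t")
  case True
  then show ?thesis using pos_form_diag[OF assms(1-3)] by (simp add: less_eq_complex_def complex_eq_iff)
next
  case False
  have "Im (A s s) = 0" "Im (A t t) = 0"
    using pos_form_diag[OF assms(1-3)] pos_form_diag[OF assms(1,2,4)] by (auto simp: less_eq_complex_def)
  moreover have "Im (A s s + A s t + A t s + A t t) = 0"
    using pos_form_nonneg[OF assms(2), of "\<lambda>x. if x = s then 1 else if x = t then 1 else 0"]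
      quad_form_two_points[OF assms(1,3,4) False, of A 1 1]
    by (simp add: less_eq_complex_def)
  moreover have "Im (\<i> * A s t - \<i> * A t s + A s s + A t t) = 0"
    using pos_form_nonneg[OF assms(2), of "\<lambda>x. if x = s then 1 else if x = t then \<i> else 0"]
      quad_form_two_points[OF assms(1,3,4) False, of A 1 \<i>]
    by (simp add: less_eq_complex_def algebra_simps)
  ultimately show ?thesis by (simp add: complex_eq_iff)
qed

text \<open>A vanishing diagonal entry forces its row to vanish: otherwise the test vector
  \<open>- r c |x\<rangle> + |t\<rangle>\<close> with \<open>c = A x t\<close> and large real \<open>r\<close> gives a negative value.\<close>
lemma pos_form_zero_row:
  assumes "finite S" "pos_form S A" "x \<in> S" "A x x = 0" "t \<in> S"
  shows "A x t = 0"
proof (rule ccontr)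
  define c where "c = A x t"
  assume "A x t \<noteq> 0"
  then have "t \<noteq> x" and n_pos: "(cmod c)\<^sup>2 > 0" using assms(4) c_def by auto
  define r where "r = (Re (A t t) + 1) / (2 * (cmod c)\<^sup>2)"
  define a where "a = - (complex_of_real r * c)"
  have "0 \<le> quad_form S A (\<lambda>y. if y = x then a else if y = t then 1 else 0)"
    using assms(2) by (rule pos_form_nonneg)
  also have "\<dots> = cnj a * c + cnj c * a + A t t"
    using quad_form_two_points[OF assms(1,3,5) \<open>t \<noteq> x\<close>[symmetric], of A a 1] assms(4)
      pos_form_hermitian[OF assms(1,2,3,5)] c_def by simp
  also have "\<dots> = - complex_of_real (2 * r * (cmod c)\<^sup>2) + A t t"
    unfolding a_def using complex_norm_square[of c] by (simp add: algebra_simps)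
  finally have "2 * r * (cmod c)\<^sup>2 \<le> Re (A t t)" by (simp add: less_eq_complex_def)
  moreover have "2 * r * (cmod c)\<^sup>2 = Re (A t t) + 1" unfolding r_def using n_pos by simp
  ultimately show False by simp
qed

lemma quad_form_diff_outer:
  "quad_form S (\<lambda>s t. A s t - v s * cnj (v t)) \<psi>
     = quad_form S A \<psi> - (\<Sum>s\<in>S. cnj (\<psi> s) * v s) * cnj (\<Sum>t\<in>S. cnj (\<psi> t) * v t)"
  unfolding quad_form_def by (simp add: sum_subtractf algebra_simps sum_distrib_left sum_distrib_right)

lemma quad_form_add_point:
  assumes "finite S" "x \<in> S"
  shows "quad_form S A (\<lambda>s. \<psi> s + (if s = x then m else 0)) =
     quad_form S A \<psi> + cnj m * (\<Sum>t\<in>S. A x t * \<psi> t) + m * (\<Sum>s\<in>S. cnj (\<psi> s) * A s x)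
       + cnj m * A x x * m"
proof -
  have right: "(\<Sum>t\<in>S. f t * (if t = x then m else 0)) = f x * m" for f :: "_ \<Rightarrow> complex"
    using assms by (simp add: if_distrib if_distribR sum.delta' cong: if_cong)
  have left: "(\<Sum>s\<in>S. cnj (if s = x then m else 0) * f s) = cnj m * f x" for f :: "_ \<Rightarrow> complex"
    using assms by (simp add: if_distrib if_distribR sum.delta' cong: if_cong)
  have "quad_form S A (\<lambda>s. \<psi> s + (if s = x then m else 0)) =
      quad_form S A \<psi> + (\<Sum>s\<in>S. \<Sum>t\<in>S. cnj (\<psi> s) * A s t * (if t = x then m else 0))
      + (\<Sum>s\<in>S. cnj (if s = x then m else 0) * (\<Sum>t\<in>S. A s t * \<psi> t))
      + (\<Sum>s\<in>S. cnj (if s = x then m else 0) * (\<Sum>t\<in>S. A s t * (if t = x then m else 0)))"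
    unfolding quad_form_def by (simp add: sum.distrib sum_distrib_left algebra_simps del: complex_cnj_cancel_iff)
  also have "\<dots> = quad_form S A \<psi> + cnj m * (\<Sum>t\<in>S. A x t * \<psi> t) + m * (\<Sum>s\<in>S. cnj (\<psi> s) * A s x)
       + cnj m * A x x * m"
    unfolding left right by (simp add: sum_distrib_left sum_distrib_right mult_ac)
  finally show ?thesis .
qed

text \<open>One step of Cholesky elimination, with \<open>v\<close> the pivot column scaled by \<open>1 / sqrt (A x x)\<close>;
  positivity is kept because the new form at \<open>\<psi>\<close> is the old one at \<open>\<psi> - (\<beta> / A x x) e\<^sub>x\<close>.\<close>
lemma pos_form_pivot:
  assumes fin: "finite S" and pos: "pos_form S A" and x: "x \<in> S"
  shows "\<exists>v. pos_form S (\<lambda>s t. A s t - v s * cnj (v t)) \<and> A x x = v x * cnj (v x)"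
proof (cases "A x x = 0")
  case True
  then show ?thesis using pos by (intro exI[of _ "\<lambda>_. 0"]) simp
next
  case False
  define a where "a = Re (A x x)"
  have Axx: "A x x = complex_of_real a" and a_pos: "a > 0"
    using pos_form_diag[OF fin pos x] False by (auto simp: a_def less_eq_complex_def complex_eq_iff)
  define v where "v = (\<lambda>s. A s x / complex_of_real (sqrt a))"
  have sqrt_sq: "complex_of_real (sqrt a) * complex_of_real (sqrt a) = complex_of_real a"
    using a_pos by (simp flip: of_real_mult)
  have "pos_form S (\<lambda>s t. A s t - v s * cnj (v t))"
    unfolding pos_form_def
  proof
    fix \<psi>
    define \<beta> where "\<beta> = (\<Sum>t\<in>S. A x t * \<psi> t)"
    have col: "(\<Sum>s\<in>S. cnj (\<psi> s) * A s x) = cnj \<beta>"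
      unfolding \<beta>_def using pos_form_hermitian[OF fin pos x] by (simp add: mult.commute)
    have "(\<Sum>s\<in>S. cnj (\<psi> s) * v s) = cnj \<beta> / complex_of_real (sqrt a)"
      unfolding v_def using col by (simp add: sum_divide_distrib[symmetric] algebra_simps)
    then have "quad_form S (\<lambda>s t. A s t - v s * cnj (v t)) \<psi> = quad_form S A \<psi> - cnj \<beta> * \<beta> / complex_of_real a"
      unfolding quad_form_diff_outer using sqrt_sq by (simp add: field_simps)
    also have "\<dots> = quad_form S A (\<lambda>s. \<psi> s + (if s = x then - \<beta> / complex_of_real a else 0))"
      unfolding quad_form_add_point[OF fin x] \<beta>_def[symmetric] col Axx using a_pos
      by (simp add: field_simps)
    finally show "0 \<le> quad_form S (\<lambda>s t. A s t - v s * cnj (v t)) \<psi>"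
      using pos unfolding pos_form_def by simp
  qed
  moreover have "A x x = v x * cnj (v x)"
    unfolding v_def Axx using sqrt_sq a_pos by (simp add: field_simps)
  ultimately show ?thesis by blast
qed

lemma pos_form_restrict:
  assumes "finite S" "x \<notin> S" "pos_form (insert x S) A" "\<And>t. A x t = 0" "\<And>t. A t x = 0"
  shows "pos_form S A"
proof -
  have "quad_form (insert x S) A \<psi> = quad_form S A \<psi>" for \<psi>
    unfolding quad_form_def using assms(1,2,4,5) by simp
  then show ?thesis using assms(3) unfolding pos_form_def by metis
qed

lemma pos_form_sum_outer:
  assumes "finite S" "pos_form S A"
  shows "\<exists>(n::nat) v. \<forall>s\<in>S. \<forall>t\<in>S. A s t = (\<Sum>k<n. v k s * cnj (v k t))"
  using assms
proof (induction S arbitrary: A rule: finite_induct)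
  case empty
  then show ?case by auto
next
  case (insert x S)
  have fin: "finite (insert x S)" using insert.hyps by simp
  obtain v0 where pos: "pos_form (insert x S) (\<lambda>s t. A s t - v0 s * cnj (v0 t))"
    and pivot: "A x x = v0 x * cnj (v0 x)"
    using pos_form_pivot[OF fin insert.prems] by blast
  define B where "B = (\<lambda>s t. A s t - v0 s * cnj (v0 t))"
  have row: "B x t = 0" if "t \<in> insert x S" for t
    using pos_form_zero_row[OF fin pos[folded B_def] _ _ that] pivot by (simp add: B_def)
  have col: "B t x = 0" if "t \<in> insert x S" for t
    using pos_form_hermitian[OF fin pos[folded B_def] _ that, of x] row[OF that] by simp
  define A' where "A' = (\<lambda>s t. if s = x \<or> t = x then 0 else B s t)"
  have "quad_form (insert x S) A' \<psi> = quad_form (insert x S) B \<psi>" for \<psi>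
    unfolding quad_form_def A'_def using row col by (intro sum.cong refl) auto
  then have "pos_form (insert x S) A'"
    using pos unfolding pos_form_def B_def by simp
  then have "pos_form S A'"
    by (rule pos_form_restrict[OF insert.hyps(1,2)]) (simp_all add: A'_def)
  then obtain n :: nat and v where v: "\<forall>s\<in>S. \<forall>t\<in>S. A' s t = (\<Sum>k<n. v k s * cnj (v k t))"
    using insert.IH by blast
  define w where "w = (\<lambda>k. if k = n then v0 else (v k)(x := 0))"
  have "A s t = (\<Sum>k<Suc n. w k s * cnj (w k t))" if "s \<in> insert x S" "t \<in> insert x S" for s t
  proof (cases "s = x \<or> t = x")
    case True
    then have "B s t = 0" using row col that by auto
    then show ?thesis using True by (auto simp: w_def B_def)
  next
    case False
    then have "B s t = (\<Sum>k<n. v k s * cnj (v k t))"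
      using v[rule_format, of s t] that unfolding A'_def by simp
    then show ?thesis using False by (simp add: w_def B_def diff_eq_eq)
  qed
  then show ?case by blast
qed

definition join_asg :: "nat set \<Rightarrow> asgn \<Rightarrow> asgn \<Rightarrow> asgn" where
  "join_asg V u a = (\<lambda>q. if q \<in> V then u q else a q)"

lemma asg_eq_image: "asg X = (\<lambda>S q. q \<in> S) ` Pow X"
proof
  show "asg X \<subseteq> (\<lambda>S q. q \<in> S) ` Pow X"
  proof
    fix s assume "s \<in> asg X"
    then have "s = (\<lambda>q. q \<in> {q. s q})" "{q. s q} \<in> Pow X" by (auto simp: asg_def)
    then show "s \<in> (\<lambda>S q. q \<in> S) ` Pow X" by blast
  qed
qed (auto simp: asg_def)

lemma finite_asg [simp]: "finite X \<Longrightarrow> finite (asg X)"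
  by (simp add: asg_eq_image)

lemma card_asg:
  assumes "finite X"
  shows "card (asg X) = 2 ^ card X"
proof -
  have "inj_on (\<lambda>S q. q \<in> S) (Pow X)"
    by (rule inj_onI) (auto simp: fun_eq_iff)
  then show ?thesis using assms by (simp add: asg_eq_image card_image card_Pow)
qed

lemma restr_in_asg [simp]: "restr X s \<in> asg X"
  by (simp add: restr_def asg_def)

lemma restr_asg: "s \<in> asg X \<Longrightarrow> restr X s = s"
  by (auto simp: restr_def asg_def fun_eq_iff)

lemma join_restr: "s \<in> asg X \<Longrightarrow> Y \<subseteq> X \<Longrightarrow> join_asg Y (restr Y s) (restr (X - Y) s) = s"
  by (auto simp: join_asg_def restr_def asg_def fun_eq_iff)

lemma join_in_asg: "u \<in> asg Y \<Longrightarrow> a \<in> asg (X - Y) \<Longrightarrow> Y \<subseteq> X \<Longrightarrow> join_asg Y u a \<in> asg X"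
  by (auto simp: join_asg_def asg_def)

lemma restr_join_left [simp]: "u \<in> asg Y \<Longrightarrow> restr Y (join_asg Y u a) = u"
  by (auto simp: join_asg_def restr_def asg_def fun_eq_iff)

lemma restr_join_right [simp]: "a \<in> asg (X - Y) \<Longrightarrow> restr (X - Y) (join_asg Y u a) = a"
  by (auto simp: join_asg_def restr_def asg_def fun_eq_iff)

lemma sum_asg_split:
  assumes "finite X" "Y \<subseteq> X"
  shows "(\<Sum>s\<in>asg X. f s) = (\<Sum>u\<in>asg Y. \<Sum>a\<in>asg (X - Y). f (join_asg Y u a))"
proof -
  have "bij_betw (\<lambda>(u, a). join_asg Y u a) (asg Y \<times> asg (X - Y)) (asg X)"
    by (rule bij_betw_byWitness[where f' = "\<lambda>s. (restr Y s, restr (X - Y) s)"])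
      (use assms in \<open>auto simp: join_restr join_in_asg\<close>)
  then have "(\<Sum>s\<in>asg X. f s) = (\<Sum>(u, a)\<in>asg Y \<times> asg (X - Y). f (join_asg Y u a))"
    by (simp add: sum.reindex_bij_betw[symmetric] case_prod_unfold)
  then show ?thesis by (simp add: sum.cartesian_product)
qed

lemma sum_asg_split2:
  assumes "finite X" "Y \<subseteq> X"
  shows "(\<Sum>s\<in>asg X. \<Sum>t\<in>asg X. f s t) =
    (\<Sum>p\<in>asg Y. \<Sum>a\<in>asg (X - Y). \<Sum>q\<in>asg Y. \<Sum>b\<in>asg (X - Y). f (join_asg Y p a) (join_asg Y q b))"
  by (simp add: sum_asg_split[OF assms])

lemma block_join:
  "block V \<rho> a b = (\<lambda>u w. if u \<in> asg V \<and> w \<in> asg V then \<rho> (join_asg V u a) (join_asg V w b) else 0)"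
  by (simp only: block_def join_asg_def)

lemma block_in_ops: "block V \<rho> a b \<in> ops V"
  by (auto simp: block_def ops_def)

definition outer :: "vec \<Rightarrow> op" where
  "outer v = (\<lambda>s t. v s * cnj (v t))"

lemma cnj_mult_self_nonneg: "0 \<le> cnj z * (z::complex)"
  using complex_norm_square[of z] by (simp add: less_eq_complex_def mult.commute)

lemma quad_form_outer: "quad_form S (outer v) \<psi> = cnj (\<Sum>t\<in>S. cnj (v t) * \<psi> t) * (\<Sum>t\<in>S. cnj (v t) * \<psi> t)"
  unfolding quad_form_def outer_def by (simp add: sum_distrib_left sum_distrib_right mult_ac)

definition matrix_unit :: "asgn \<Rightarrow> asgn \<Rightarrow> op" where
  "matrix_unit u w = (\<lambda>s t. if s = u \<and> t = w then 1 else 0)"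

lemma matrix_unit_in_ops: "u \<in> asg V \<Longrightarrow> w \<in> asg V \<Longrightarrow> matrix_unit u w \<in> ops V"
  by (auto simp: matrix_unit_def ops_def)

lemma tr_mult_commute: "tr X (mult X A B) = tr X (mult X B A)"
  unfolding tr_def mult_def by (subst sum.swap) (simp add: mult.commute)

lemma tr_mult_matrix_unit:
  assumes "finite V" "u \<in> asg V" "w \<in> asg V"
  shows "tr V (mult V (matrix_unit u w) C) = C w u"
proof -
  have "tr V (mult V (matrix_unit u w) C) = (\<Sum>s\<in>asg V. if s = u then C w s else 0)"
    unfolding tr_def mult_def matrix_unit_def
    by (intro sum.cong refl) (simp add: if_distrib if_distribR assms sum.delta cong: if_cong)
  then show ?thesis using assms by simp
qed

lemma tr_mult_idop: "finite X \<Longrightarrow> tr X (mult X (idop X) \<rho>) = tr X \<rho>"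
  unfolding tr_def mult_def idop_def by (intro sum.cong refl) (simp add: if_distrib if_distribR sum.delta' cong: if_cong)

lemma tr_mult_minus: "tr X (mult X (minus_op A B) C) = tr X (mult X A C) - tr X (mult X B C)"
  unfolding tr_def mult_def minus_op_def by (simp add: sum_subtractf algebra_simps)

lemma tr_mult_outer_right: "tr X (mult X A (outer \<psi>)) = quad_form (asg X) A \<psi>"
  unfolding tr_def mult_def outer_def quad_form_def by (simp add: sum_distrib_right mult_ac)

lemma tr_mult_outer_left: "tr X (mult X (outer \<psi>) A) = quad_form (asg X) A \<psi>"
  by (simp add: tr_mult_commute tr_mult_outer_right)

lemma tr_mult_sum_outer:
  assumes "\<forall>s\<in>asg X. \<forall>t\<in>asg X. A s t = (\<Sum>k<m. v k s * cnj (v k t))"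
  shows "tr X (mult X A P) = (\<Sum>k<m. quad_form (asg X) P (v k))"
proof -
  have "tr X (mult X A P) = (\<Sum>s\<in>asg X. \<Sum>u\<in>asg X. \<Sum>k<m. cnj (v k u) * P u s * v k s)"
    unfolding tr_def mult_def using assms by (simp add: sum_distrib_left sum_distrib_right mult_ac)
  also have "\<dots> = (\<Sum>k<m. \<Sum>s\<in>asg X. \<Sum>u\<in>asg X. cnj (v k u) * P u s * v k s)"
    by (subst sum.swap) (rule sum.swap)
  also have "\<dots> = (\<Sum>k<m. \<Sum>u\<in>asg X. \<Sum>s\<in>asg X. cnj (v k u) * P u s * v k s)"
    by (rule sum.cong[OF refl], rule sum.swap)
  finally show ?thesis unfolding quad_form_def .
qed

lemma quad_form_sum:
  assumes "\<forall>s\<in>asg X. \<forall>t\<in>asg X. P s t = (\<Sum>l<m. Q l s t)"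
  shows "quad_form (asg X) P n = (\<Sum>l<m. quad_form (asg X) (Q l) n)"
  unfolding quad_form_def using assms
  by (simp add: sum_distrib_left sum_distrib_right sum.swap[of _ "{..<m}"] cong: sum.cong)

lemma tr_mult_blocks:
  assumes fin: "finite X" and VX: "V \<subseteq> X"
  shows "tr X (mult X A C) =
    (\<Sum>a\<in>asg (X - V). \<Sum>b\<in>asg (X - V). tr V (mult V (block V A a b) (block V C b a)))"
proof -
  let ?j = "join_asg V" and ?R = "asg (X - V)"
  have "tr X (mult X A C) =
      (\<Sum>p\<in>asg V. \<Sum>a\<in>?R. \<Sum>q\<in>asg V. \<Sum>b\<in>?R. A (?j p a) (?j q b) * C (?j q b) (?j p a))"
    unfolding tr_def mult_def sum_asg_split2[OF fin VX] ..
  also have "\<dots> = (\<Sum>a\<in>?R. \<Sum>p\<in>asg V. \<Sum>b\<in>?R. \<Sum>q\<in>asg V. A (?j p a) (?j q b) * C (?j q b) (?j p a))"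
    by (subst sum.swap) (rule sum.cong[OF refl], rule sum.cong[OF refl], rule sum.swap)
  also have "\<dots> = (\<Sum>a\<in>?R. \<Sum>b\<in>?R. \<Sum>p\<in>asg V. \<Sum>q\<in>asg V. A (?j p a) (?j q b) * C (?j q b) (?j p a))"
    by (rule sum.cong[OF refl], rule sum.swap)
  also have "\<dots> = (\<Sum>a\<in>?R. \<Sum>b\<in>?R. tr V (mult V (block V A a b) (block V C b a)))"
    unfolding tr_def mult_def by (simp add: block_join)
  finally show ?thesis .
qed

lemma psd_iff_quad_form: "psd X A \<longleftrightarrow> A \<in> ops X \<and> pos_form (asg X) A"
  by (simp add: psd_def pos_form_def quad_form_def)

lemma psd_pos_form: "psd X A \<Longrightarrow> pos_form (asg X) A"
  by (simp add: psd_iff_quad_form)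

lemma psd_outer:
  assumes "\<And>s. s \<notin> asg X \<Longrightarrow> v s = 0"
  shows "psd X (outer v)"
proof -
  have "0 \<le> quad_form (asg X) (outer v) \<psi>" for \<psi>
    unfolding quad_form_outer by (rule cnj_mult_self_nonneg)
  then show ?thesis using assms by (auto simp: psd_iff_quad_form pos_form_def ops_def outer_def)
qed

lemma psd_intro_outer:
  assumes "A \<in> ops X" and "\<And>\<psi>. (\<And>s. s \<notin> asg X \<Longrightarrow> \<psi> s = 0) \<Longrightarrow> 0 \<le> tr X (mult X A (outer \<psi>))"
  shows "psd X A"
proof -
  have "0 \<le> quad_form (asg X) A \<psi>" for \<psi>
    using assms(2)[of "\<lambda>s. if s \<in> asg X then \<psi> s else 0"]
    by (simp add: tr_mult_outer_right quad_form_def)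
  then show ?thesis using assms(1) by (simp add: psd_iff_quad_form pos_form_def)
qed

lemma psd_tr_nonneg:
  assumes "finite X" "psd X A"
  shows "0 \<le> tr X A"
  unfolding tr_def using pos_form_diag[OF finite_asg psd_pos_form] assms by (simp add: sum_nonneg)

lemma tr_mult_psd_nonneg:
  assumes fin: "finite X" and A: "psd X A" and B: "psd X B"
  shows "0 \<le> tr X (mult X A B)"
proof -
  obtain m :: nat and v where v: "\<forall>s\<in>asg X. \<forall>t\<in>asg X. A s t = (\<Sum>k<m. v k s * cnj (v k t))"
    using pos_form_sum_outer[OF finite_asg[OF fin] psd_pos_form[OF A]] by blast
  then show ?thesis
    unfolding tr_mult_sum_outer[OF v] using B by (simp add: sum_nonneg psd_iff_quad_form pos_form_def)
qed

lemma psd_idop_minus_outer: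
  assumes fin: "finite X" and supp: "\<And>s. s \<notin> asg X \<Longrightarrow> w s = 0"
    and unit: "(\<Sum>s\<in>asg X. cnj (w s) * w s) = 1"
  shows "psd X (minus_op (idop X) (outer w))"
proof (rule psd_intro_outer)
  show "minus_op (idop X) (outer w) \<in> ops X"
    using supp by (auto simp: ops_def minus_op_def idop_def outer_def)
  fix \<psi> :: vec
  define \<beta> where "\<beta> = (\<Sum>s\<in>asg X. cnj (w s) * \<psi> s)"
  have \<beta>_cnj: "(\<Sum>s\<in>asg X. cnj (\<psi> s) * w s) = cnj \<beta>"
    unfolding \<beta>_def by (simp add: mult.commute)
  have "tr X (mult X (minus_op (idop X) (outer w)) (outer \<psi>)) = (\<Sum>s\<in>asg X. cnj (\<psi> s) * \<psi> s) - cnj \<beta> * \<beta>"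
    unfolding tr_mult_minus tr_mult_idop[OF fin] tr_mult_outer_left quad_form_outer
    by (simp add: tr_def outer_def \<beta>_def mult.commute)
  also have "\<dots> = (\<Sum>s\<in>asg X. cnj (\<psi> s - \<beta> * w s) * (\<psi> s - \<beta> * w s))"
  proof -
    have "(\<Sum>s\<in>asg X. cnj (\<psi> s - \<beta> * w s) * (\<psi> s - \<beta> * w s)) =
       (\<Sum>s\<in>asg X. cnj (\<psi> s) * \<psi> s) - \<beta> * (\<Sum>s\<in>asg X. cnj (\<psi> s) * w s)
       - cnj \<beta> * (\<Sum>s\<in>asg X. cnj (w s) * \<psi> s) + cnj \<beta> * \<beta> * (\<Sum>s\<in>asg X. cnj (w s) * w s)"
      by (simp add: algebra_simps sum_subtractf sum.distrib sum_distrib_left)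
    then show ?thesis unfolding \<beta>_cnj unit \<beta>_def[symmetric] by simp
  qed
  finally have expand: "tr X (mult X (minus_op (idop X) (outer w)) (outer \<psi>)) =
      (\<Sum>s\<in>asg X. cnj (\<psi> s - \<beta> * w s) * (\<psi> s - \<beta> * w s))" .
  show "0 \<le> tr X (mult X (minus_op (idop X) (outer w)) (outer \<psi>))"
    unfolding expand by (intro sum_nonneg cnj_mult_self_nonneg)
qed

lemma psd_block:
  assumes fin: "finite X" and VX: "V \<subseteq> X" and \<rho>: "psd X \<rho>" and a: "a \<in> asg (X - V)"
  shows "psd V (block V \<rho> a a)"
  unfolding psd_iff_quad_form pos_form_def
proof (intro conjI allI block_in_ops)
  fix \<phi> :: vec
  let ?slice = "\<lambda>p. join_asg V p a"
  define \<psi> where "\<psi> = (\<lambda>s. if s \<in> ?slice ` asg V then \<phi> (restr V s) else 0)"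
  have inj: "inj_on ?slice (asg V)"
    by (rule inj_on_inverseI[of _ "restr V"]) simp
  have "?slice ` asg V \<subseteq> asg X" using join_in_asg[OF _ a VX] by auto
  then have "quad_form (asg X) \<rho> \<psi> = quad_form (?slice ` asg V) \<rho> \<psi>"
    by (rule quad_form_subset[OF finite_asg[OF fin]]) (simp add: \<psi>_def)
  also have "\<dots> = quad_form (asg V) (block V \<rho> a a) \<phi>"
    unfolding quad_form_def sum.reindex[OF inj] by (intro sum.cong refl) (simp add: \<psi>_def block_join)
  finally show "0 \<le> quad_form (asg V) (block V \<rho> a a) \<phi>"
    using \<rho> by (metis psd_iff_quad_form pos_form_def)
qed

lemma extOp_idop: "W \<subseteq> X \<Longrightarrow> extOp X W (idop W) = idop X"
  unfolding extOp_def idop_def by (auto simp: fun_eq_iff restr_def asg_def)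

lemma extOp_minus: "extOp X W (minus_op A B) = minus_op (extOp X W A) (extOp X W B)"
  unfolding extOp_def minus_op_def by (simp add: fun_eq_iff)

lemma extOp_self: "A \<in> ops X \<Longrightarrow> extOp X X A = A"
  unfolding extOp_def ops_def by (auto simp: fun_eq_iff restr_asg)

lemma tr_mult_extOp_compl:
  assumes "finite X" "W \<subseteq> X"
  shows "tr X (mult X (extOp X W (minus_op (idop W) N)) P) = tr X P - tr X (mult X (extOp X W N) P)"
  unfolding extOp_minus extOp_idop[OF assms(2)] tr_mult_minus tr_mult_idop[OF assms(1)] ..

lemma effects_compl: "M \<in> effects W \<Longrightarrow> minus_op (idop W) M \<in> effects W"
  unfolding effects_def minus_op_def by simp

lemma psd_extOp:
  assumes fin: "finite X" and WX: "W \<subseteq> X" and K: "psd W K"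
  shows "psd X (extOp X W K)"
  unfolding psd_def
proof (intro conjI allI)
  show "extOp X W K \<in> ops X" by (auto simp: extOp_def ops_def)
  fix \<psi> :: vec
  let ?j = "join_asg W"
  have agree: "(\<forall>q\<in>X - W. ?j p c q = ?j p' c' q) \<longleftrightarrow> c = c'"
    if "c \<in> asg (X - W)" "c' \<in> asg (X - W)" for p p' c c'
    using that by (auto simp: join_asg_def asg_def fun_eq_iff)
  have "(\<Sum>s\<in>asg X. \<Sum>t\<in>asg X. cnj (\<psi> s) * extOp X W K s t * \<psi> t) =
     (\<Sum>p\<in>asg W. \<Sum>c\<in>asg (X - W). \<Sum>q\<in>asg W. \<Sum>c'\<in>asg (X - W).
        if c = c' then cnj (\<psi> (?j p c)) * K p q * \<psi> (?j q c') else 0)"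
    unfolding sum_asg_split2[OF fin WX]
    by (intro sum.cong refl) (simp add: extOp_def join_in_asg[OF _ _ WX] agree)
  also have "\<dots> = (\<Sum>c\<in>asg (X - W). quad_form (asg W) K (\<lambda>p. \<psi> (?j p c)))"
    unfolding quad_form_def using fin by (subst sum.swap) (simp add: sum.delta cong: sum.cong)
  finally show "0 \<le> (\<Sum>s\<in>asg X. \<Sum>t\<in>asg X. cnj (\<psi> s) * extOp X W K s t * \<psi> t)"
    using K by (simp add: sum_nonneg psd_iff_quad_form pos_form_def)
qed

section \<open>Programs and their Choi matrices\<close>

lemma dprog_ops: "dprog V E \<Longrightarrow> A \<in> ops V \<Longrightarrow> E A \<in> ops V"
  unfolding dprog_def by simp

lemma dprog_add: "dprog V E \<Longrightarrow> A \<in> ops V \<Longrightarrow> B \<in> ops V \<Longrightarrow>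
    E (\<lambda>s t. A s t + B s t) = (\<lambda>s t. E A s t + E B s t)"
  unfolding dprog_def by (elim conjE) (drule bspec, assumption, drule bspec, assumption)

lemma dprog_smult: "dprog V E \<Longrightarrow> A \<in> ops V \<Longrightarrow> E (\<lambda>s t. c * A s t) = (\<lambda>s t. c * E A s t)"
  unfolding dprog_def by (elim conjE) (drule spec[of _ c], drule bspec, assumption)

lemma dprog_extE_psd: "dprog V E \<Longrightarrow> finite X \<Longrightarrow> V \<subseteq> X \<Longrightarrow> psd X \<rho> \<Longrightarrow> psd X (extE X V E \<rho>)"
  unfolding dprog_def by simp

lemma dprog_tr_le: "dprog V E \<Longrightarrow> psd V \<rho> \<Longrightarrow> Re (tr V (E \<rho>)) \<le> Re (tr V \<rho>)"
  unfolding dprog_def by simp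

lemma dprog_sum:
  assumes E: "dprog V E" and fin: "finite I" and B: "\<And>i. i \<in> I \<Longrightarrow> B i \<in> ops V"
  shows "E (\<lambda>s t. \<Sum>i\<in>I. B i s t) = (\<lambda>s t. \<Sum>i\<in>I. E (B i) s t)"
  using fin B
proof (induction I rule: finite_induct)
  case empty
  have "E (\<lambda>s t. 0 * 0) = (\<lambda>s t. 0 * E (\<lambda>s t. 0) s t)"
    by (rule dprog_smult[OF E]) (simp add: ops_def)
  then show ?case by simp
next
  case (insert i I)
  have "(\<lambda>s t. \<Sum>i\<in>I. B i s t) \<in> ops V" using insert.prems by (auto simp: ops_def)
  then show ?case
    using insert dprog_add[OF E, of "B i" "\<lambda>s t. \<Sum>i\<in>I. B i s t"] by simp
qed

definition choi :: "(op \<Rightarrow> op) \<Rightarrow> asgn \<Rightarrow> asgn \<Rightarrow> asgn \<Rightarrow> asgn \<Rightarrow> complex" where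
  "choi E u w s t = E (matrix_unit u w) s t"

lemma dprog_choi_expand:
  assumes E: "dprog V E" and fin: "finite V" and A: "A \<in> ops V"
  shows "E A = (\<lambda>s t. \<Sum>u\<in>asg V. \<Sum>w\<in>asg V. A u w * choi E u w s t)"
proof -
  define B where "B = (\<lambda>(u, w) s t. A u w * matrix_unit u w s t)"
  have B_ops: "B i \<in> ops V" if "i \<in> asg V \<times> asg V" for i
    using that by (auto simp: B_def matrix_unit_def ops_def)
  have "A s t = (\<Sum>i\<in>asg V \<times> asg V. B i s t)" for s t
  proof (cases "s \<in> asg V \<and> t \<in> asg V")
    case True
    have "(\<Sum>i\<in>asg V \<times> asg V. B i s t) = (\<Sum>i\<in>asg V \<times> asg V. if i = (s, t) then A s t else 0)"
      by (intro sum.cong) (auto simp: B_def matrix_unit_def split: if_splits)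
    then show ?thesis using True fin by simp
  next
    case False
    then show ?thesis
      using A by (auto simp: B_def matrix_unit_def ops_def case_prod_unfold intro!: sum.neutral)
  qed
  then have "E A = E (\<lambda>s t. \<Sum>i\<in>asg V \<times> asg V. B i s t)" by presburger
  also have "\<dots> = (\<lambda>s t. \<Sum>i\<in>asg V \<times> asg V. E (B i) s t)"
    using fin B_ops by (intro dprog_sum[OF E]) auto
  also have "\<dots> = (\<lambda>s t. \<Sum>(u, w)\<in>asg V \<times> asg V. A u w * choi E u w s t)"
    using dprog_smult[OF E matrix_unit_in_ops] by (intro ext sum.cong) (auto simp: B_def choi_def)
  finally show ?thesis by (simp add: sum.cartesian_product)
qed

lemma extE_choi:
  assumes E: "dprog V E" and fin: "finite V"
  shows "extE X V E \<rho> s t = (if s \<in> asg X \<and> t \<in> asg X then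
     (\<Sum>u\<in>asg V. \<Sum>w\<in>asg V. \<rho> (join_asg V u (restr (X - V) s)) (join_asg V w (restr (X - V) t))
        * choi E u w (restr V s) (restr V t))
     else 0)"
  unfolding extE_def dprog_choi_expand[OF E fin block_in_ops] by (simp add: block_join)

lemma block_extE:
  assumes F: "\<And>A. A \<in> ops V \<Longrightarrow> F A \<in> ops V"
    and VX: "V \<subseteq> X" and a: "a \<in> asg (X - V)" and b: "b \<in> asg (X - V)"
  shows "block V (extE X V F \<rho>) a b = F (block V \<rho> a b)"
proof (intro ext)
  fix u w
  show "block V (extE X V F \<rho>) a b u w = F (block V \<rho> a b) u w"
  proof (cases "u \<in> asg V \<and> w \<in> asg V")
    case True
    then show ?thesis using a b join_in_asg[OF _ _ VX] by (simp add: block_join extE_def)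
  next
    case False
    then show ?thesis using F[OF block_in_ops] by (auto simp: block_join ops_def)
  qed
qed

lemma tr_extE_le:
  assumes E: "dprog V E" and fin: "finite X" and VX: "V \<subseteq> X" and \<rho>: "psd X \<rho>"
  shows "Re (tr X (extE X V E \<rho>)) \<le> Re (tr X \<rho>)"
proof -
  have tr_blocks: "tr X A = (\<Sum>a\<in>asg (X - V). tr V (block V A a a))" for A
    unfolding tr_def sum_asg_split[OF fin VX] block_join by (subst sum.swap) simp
  have "tr X (extE X V E \<rho>) = (\<Sum>a\<in>asg (X - V). tr V (E (block V \<rho> a a)))"
    unfolding tr_blocks by (intro sum.cong refl) (simp add: block_extE[OF dprog_ops[OF E] VX])
  then show ?thesis unfolding tr_blocks[of \<rho>] Re_sum
    by (auto intro: sum_mono dprog_tr_le[OF E] psd_block[OF fin VX \<rho>])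
qed

text \<open>\<open>partial_inner X V n r p u = \<langle>n| (|p\<rangle>\<langle>u| \<otimes> I\<^bsub>X - V\<^esub>) |r\<rangle>\<close>, and \<open>choi_form V D G\<close> is the
  Hermitian form of the Choi matrix of \<open>D\<close> at the vector \<open>(w, q) \<mapsto> cnj (G q w)\<close>.\<close>
definition partial_inner :: "nat set \<Rightarrow> nat set \<Rightarrow> vec \<Rightarrow> vec \<Rightarrow> asgn \<Rightarrow> asgn \<Rightarrow> complex" where
  "partial_inner X V n r p u = (\<Sum>a\<in>asg (X - V). cnj (n (join_asg V p a)) * r (join_asg V u a))"

definition choi_form :: "nat set \<Rightarrow> (op \<Rightarrow> op) \<Rightarrow> (asgn \<Rightarrow> asgn \<Rightarrow> complex) \<Rightarrow> complex" where
  "choi_form V D G =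
     (\<Sum>p\<in>asg V. \<Sum>q\<in>asg V. \<Sum>u\<in>asg V. \<Sum>w\<in>asg V. choi D u w p q * G p u * cnj (G q w))"

lemma choi_form_cong:
  "(\<And>p u. p \<in> asg V \<Longrightarrow> u \<in> asg V \<Longrightarrow> G p u = G' p u) \<Longrightarrow> choi_form V D G = choi_form V D G'"
  unfolding choi_form_def by (intro sum.cong refl) simp

lemma choi_form_scale:
  "choi_form V D (\<lambda>p u. complex_of_real k * G p u) = complex_of_real (k * k) * choi_form V D G"
  unfolding choi_form_def by (simp add: sum_distrib_left mult_ac)

lemma quad_form_extE_outer:
  assumes D: "dprog V D" and fin: "finite X" and VX: "V \<subseteq> X"
  shows "quad_form (asg X) (extE X V D (outer r)) n = choi_form V D (partial_inner X V n r)"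
proof -
  have fV: "finite V" using fin VX finite_subset by blast
  let ?R = "X - V" and ?j = "join_asg V"
  have "quad_form (asg X) (extE X V D (outer r)) n =
     (\<Sum>p\<in>asg V. \<Sum>a\<in>asg ?R. \<Sum>q\<in>asg V. \<Sum>b\<in>asg ?R. \<Sum>u\<in>asg V. \<Sum>w\<in>asg V.
        choi D u w p q * (cnj (n (?j p a)) * r (?j u a)) * (n (?j q b) * cnj (r (?j w b))))"
    unfolding quad_form_def sum_asg_split2[OF fin VX]
    by (intro sum.cong refl)
      (simp add: extE_choi[OF D fV] join_in_asg[OF _ _ VX] outer_def sum_distrib_left sum_distrib_right mult_ac)
  also have "\<dots> = (\<Sum>p\<in>asg V. \<Sum>q\<in>asg V. \<Sum>u\<in>asg V. \<Sum>w\<in>asg V. \<Sum>a\<in>asg ?R. \<Sum>b\<in>asg ?R.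
        choi D u w p q * (cnj (n (?j p a)) * r (?j u a)) * (n (?j q b) * cnj (r (?j w b))))"
    by (rule sum.cong[OF refl], subst sum.swap, rule sum.cong[OF refl], rule sum_swap_pairs)
  also have "\<dots> = choi_form V D (partial_inner X V n r)"
    unfolding choi_form_def partial_inner_def by (simp add: sum_distrib_left sum_distrib_right mult_ac)
  finally show ?thesis .
qed

lemma extE_sum_outer:
  assumes D: "dprog V D" and fin: "finite X" and VX: "V \<subseteq> X"
    and \<rho>: "\<forall>s\<in>asg X. \<forall>t\<in>asg X. \<rho> s t = (\<Sum>l<m. r l s * cnj (r l t))"
  shows "\<forall>s\<in>asg X. \<forall>t\<in>asg X. extE X V D \<rho> s t = (\<Sum>l<m. extE X V D (outer (r l)) s t)"
proof -
  have fV: "finite V" using fin VX finite_subset by blast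
  have "join_asg V u (restr (X - V) x) \<in> asg X" if "u \<in> asg V" for u x
    using join_in_asg[OF that restr_in_asg VX] .
  then show ?thesis unfolding extE_choi[OF D fV]
    by (simp add: \<rho> outer_def sum_distrib_right sum.swap[of _ "{..<m}"] cong: sum.cong)
qed

lemma tr_mult_extE_choi_form:
  assumes D: "dprog V D" and fin: "finite X" and VX: "V \<subseteq> X"
    and K: "\<forall>s\<in>asg X. \<forall>t\<in>asg X. K s t = (\<Sum>k<m. n k s * cnj (n k t))"
    and \<rho>: "\<forall>s\<in>asg X. \<forall>t\<in>asg X. \<rho> s t = (\<Sum>l<m'. r l s * cnj (r l t))"
  shows "tr X (mult X K (extE X V D \<rho>)) = (\<Sum>k<m. \<Sum>l<m'. choi_form V D (partial_inner X V (n k) (r l)))"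
  unfolding tr_mult_sum_outer[OF K] quad_form_sum[OF extE_sum_outer[OF D fin VX \<rho>]]
  by (simp add: quad_form_extE_outer[OF D fin VX])

lemma tr_mult_extE_mono:
  assumes D1: "dprog V D1" and D2: "dprog V D2" and fin: "finite X" and VX: "V \<subseteq> X"
    and choi_le: "\<And>G. Re (choi_form V D1 G) \<le> Re (choi_form V D2 G)"
    and K: "psd X K" and \<rho>: "psd X \<rho>"
  shows "Re (tr X (mult X K (extE X V D1 \<rho>))) \<le> Re (tr X (mult X K (extE X V D2 \<rho>)))"
proof -
  obtain m :: nat and n where n: "\<forall>s\<in>asg X. \<forall>t\<in>asg X. K s t = (\<Sum>k<m. n k s * cnj (n k t))"
    using pos_form_sum_outer[OF finite_asg[OF fin] psd_pos_form[OF K]] by blast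
  obtain m' :: nat and r where r: "\<forall>s\<in>asg X. \<forall>t\<in>asg X. \<rho> s t = (\<Sum>l<m'. r l s * cnj (r l t))"
    using pos_form_sum_outer[OF finite_asg[OF fin] psd_pos_form[OF \<rho>]] by blast
  show ?thesis
    unfolding tr_mult_extE_choi_form[OF D1 fin VX n r] tr_mult_extE_choi_form[OF D2 fin VX n r] Re_sum
    by (intro sum_mono choi_le)
qed

lemma adjoint_exists:
  assumes E: "dprog V E" and fin: "finite V"
  shows "\<exists>G. (\<forall>B\<in>ops V. G B \<in> ops V) \<and>
     (\<forall>A\<in>ops V. \<forall>B\<in>ops V. tr V (mult V (E A) B) = tr V (mult V A (G B)))"
proof -
  define G where "G = (\<lambda>B w u. if w \<in> asg V \<and> u \<in> asg V
     then tr V (mult V (E (matrix_unit u w)) B) else 0)"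
  have "tr V (mult V (E A) B) = tr V (mult V A (G B))" if A: "A \<in> ops V" for A B
  proof -
    have "tr V (mult V (E A) B) =
        (\<Sum>s\<in>asg V. \<Sum>x\<in>asg V. \<Sum>u\<in>asg V. \<Sum>w\<in>asg V. A u w * (choi E u w s x * B x s))"
      unfolding tr_def mult_def dprog_choi_expand[OF E fin A]
      by (simp add: sum_distrib_left sum_distrib_right mult_ac)
    also have "\<dots> = (\<Sum>u\<in>asg V. \<Sum>w\<in>asg V. \<Sum>s\<in>asg V. \<Sum>x\<in>asg V. A u w * (choi E u w s x * B x s))"
      by (rule sum_swap_pairs)
    also have "\<dots> = tr V (mult V A (G B))"
      unfolding tr_def mult_def G_def choi_def by (simp add: sum_distrib_left)
    finally show ?thesis .
  qed
  moreover have "G B \<in> ops V" for B by (auto simp: G_def ops_def)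
  ultimately show ?thesis by blast
qed

lemma
  assumes "dprog V E" "finite V"
  shows adjoint_in_ops: "B \<in> ops V \<Longrightarrow> adjoint V E B \<in> ops V"
    and tr_mult_adjoint: "A \<in> ops V \<Longrightarrow> B \<in> ops V \<Longrightarrow>
      tr V (mult V (E A) B) = tr V (mult V A (adjoint V E B))"
  using someI_ex[OF adjoint_exists[OF assms]] unfolding adjoint_def by blast+

lemma adjoint_zero:
  assumes E: "dprog V E" and fin: "finite V"
  shows "adjoint V E (\<lambda>s t. 0) = (\<lambda>s t. 0)"
proof (intro ext)
  fix w u
  have zero: "(\<lambda>s t. 0) \<in> ops V" by (simp add: ops_def)
  show "adjoint V E (\<lambda>s t. 0) w u = 0"
  proof (cases "w \<in> asg V \<and> u \<in> asg V")
    case True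
    then have "adjoint V E (\<lambda>s t. 0) w u = tr V (mult V (E (matrix_unit u w)) (\<lambda>s t. 0))"
      using fin by (simp add: tr_mult_adjoint[OF E fin matrix_unit_in_ops zero] tr_mult_matrix_unit)
    then show ?thesis by (simp add: tr_def mult_def)
  next
    case False
    then show ?thesis using adjoint_in_ops[OF E fin zero] by (auto simp: ops_def)
  qed
qed

text \<open>Blockwise over the ancilla \<open>X - V\<close> this is the defining identity of the adjoint.\<close>
lemma tr_mult_extE_adjoint:
  assumes E: "dprog V E" and fin: "finite X" and VX: "V \<subseteq> X"
  shows "tr X (mult X (extE X V (adjoint V E) B) \<rho>) = tr X (mult X B (extE X V E \<rho>))"
proof -
  have fV: "finite V" using fin VX finite_subset by blast
  have "tr V (mult V (block V (extE X V (adjoint V E) B) a b) (block V \<rho> b a)) =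
        tr V (mult V (block V B a b) (block V (extE X V E \<rho>) b a))"
    if "a \<in> asg (X - V)" "b \<in> asg (X - V)" for a b
  proof -
    have "tr V (mult V (block V (extE X V (adjoint V E) B) a b) (block V \<rho> b a)) =
        tr V (mult V (block V \<rho> b a) (adjoint V E (block V B a b)))"
      using that by (simp add: block_extE[OF adjoint_in_ops[OF E fV] VX] tr_mult_commute)
    also have "\<dots> = tr V (mult V (E (block V \<rho> b a)) (block V B a b))"
      by (simp add: tr_mult_adjoint[OF E fV] block_in_ops)
    also have "\<dots> = tr V (mult V (block V B a b) (block V (extE X V E \<rho>) b a))"
      using that by (simp add: block_extE[OF dprog_ops[OF E] VX] tr_mult_commute)
    finally show ?thesis .
  qed
  then show ?thesis by (simp add: tr_mult_blocks[OF fin VX])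
qed

lemma extOp_extE:
  assumes VW: "V \<subseteq> W" and WX: "W \<subseteq> X" and G0: "G (\<lambda>s t. 0) = (\<lambda>s t. 0)"
  shows "extOp X W (extE W V G A) = extE X V G (extOp X W A)"
proof (intro ext)
  fix s t
  let ?j = "join_asg V"
  show "extOp X W (extE W V G A) s t = extE X V G (extOp X W A) s t"
  proof (cases "s \<in> asg X \<and> t \<in> asg X")
    case False
    then show ?thesis by (auto simp: extOp_def extE_def)
  next
    case st: True
    have restr_W: "restr (W - V) (restr W s) = restr (W - V) s" "restr (W - V) (restr W t) = restr (W - V) t"
      "restr V (restr W s) = restr V s" "restr V (restr W t) = restr V t"
      using VW by (auto simp: restr_def fun_eq_iff)
    have join_X: "?j u (restr (X - V) x) \<in> asg X" if "u \<in> asg V" for u x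
      using join_in_asg[OF that restr_in_asg] VW WX by blast
    have agree: "(\<forall>q\<in>X - W. ?j u (restr (X - V) s) q = ?j w (restr (X - V) t) q) \<longleftrightarrow>
        (\<forall>q\<in>X - W. s q = t q)" for u w
      using VW by (auto simp: join_asg_def restr_def)
    have restr_join: "restr W (?j u (restr (X - V) x)) = ?j u (restr (W - V) x)" if "u \<in> asg V" for u x
      using that VW WX by (auto simp: join_asg_def restr_def asg_def fun_eq_iff)
    show ?thesis
    proof (cases "\<forall>q\<in>X - W. s q = t q")
      case True
      have "block V (extOp X W A) (restr (X - V) s) (restr (X - V) t) =
          block V A (restr (W - V) s) (restr (W - V) t)"
        unfolding block_join
      proof (intro ext)
        fix u w
        show "(if u \<in> asg V \<and> w \<in> asg V
            then extOp X W A (?j u (restr (X - V) s)) (?j w (restr (X - V) t)) else 0) =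
          (if u \<in> asg V \<and> w \<in> asg V then A (?j u (restr (W - V) s)) (?j w (restr (W - V) t)) else 0)"
          unfolding extOp_def using join_X agree restr_join True by auto
      qed
      then show ?thesis using st True restr_W by (simp add: extOp_def extE_def)
    next
      case False
      have "block V (extOp X W A) (restr (X - V) s) (restr (X - V) t) = (\<lambda>s t. 0)"
        unfolding block_join extOp_def using agree False by (auto simp: fun_eq_iff)
      then have "extE X V G (extOp X W A) s t = 0" using st G0 by (simp add: extE_def)
      moreover have "extOp X W (extE W V G A) s t = 0" using False by (auto simp: extOp_def)
      ultimately show ?thesis by simp
    qed
  qed
qed

lemma tr_mult_extOp_extE_adjoint:
  assumes E: "dprog V E" and fin: "finite X" and VW: "V \<subseteq> W" and WX: "W \<subseteq> X"
  shows "tr X (mult X (extOp X W (extE W V (adjoint V E) M)) \<rho>) =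
    tr X (mult X (extOp X W M) (extE X V E \<rho>))"
proof -
  have VX: "V \<subseteq> X" using VW WX by (rule subset_trans)
  have fV: "finite V" using fin VX by (rule finite_subset[rotated])
  show ?thesis
    unfolding extOp_extE[where G = "adjoint V E", OF VW WX adjoint_zero[OF E fV]]
    by (rule tr_mult_extE_adjoint[OF E fin VX])
qed

text \<open>On a test state \<open>|\<psi>\<rangle>\<langle>\<psi>|\<close>, \<open>E\<dagger>(N)\<close> has expectation \<open>tr (N P)\<close> with
  \<open>P = E(|\<psi>\<rangle>\<langle>\<psi>|)\<close>, which lies between \<open>0\<close> and \<open>tr P \<le> \<parallel>\<psi>\<parallel>\<^sup>2\<close>.\<close>
lemma effects_extE_adjoint:
  assumes E: "dprog V E" and fin: "finite W" and VW: "V \<subseteq> W" and N: "N \<in> effects W"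
  shows "extE W V (adjoint V E) N \<in> effects W"
proof -
  let ?M = "extE W V (adjoint V E) N"
  have N_psd: "psd W N" "psd W (minus_op (idop W) N)" using N by (auto simp: effects_def)
  have expect: "tr W (mult W ?M (outer \<psi>)) = tr W (mult W N (extE W V E (outer \<psi>)))" for \<psi>
    by (rule tr_mult_extE_adjoint[OF E fin VW])
  have "psd W ?M"
  proof (rule psd_intro_outer)
    show "?M \<in> ops W" by (auto simp: ops_def extE_def)
    fix \<psi> :: vec
    assume "\<And>s. s \<notin> asg W \<Longrightarrow> \<psi> s = 0"
    then show "0 \<le> tr W (mult W ?M (outer \<psi>))"
      unfolding expect by (intro tr_mult_psd_nonneg[OF fin N_psd(1)] dprog_extE_psd[OF E fin VW] psd_outer)
  qed
  moreover have "psd W (minus_op (idop W) ?M)"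
  proof (rule psd_intro_outer)
    show "minus_op (idop W) ?M \<in> ops W" by (auto simp: ops_def extE_def minus_op_def idop_def)
    fix \<psi> :: vec
    assume "\<And>s. s \<notin> asg W \<Longrightarrow> \<psi> s = 0"
    then have \<psi>: "psd W (outer \<psi>)" by (rule psd_outer)
    let ?P = "extE W V E (outer \<psi>)"
    have P: "psd W ?P" by (rule dprog_extE_psd[OF E fin VW \<psi>])
    have "tr W (mult W (minus_op (idop W) ?M) (outer \<psi>)) =
        (tr W (outer \<psi>) - tr W ?P) + tr W (mult W (minus_op (idop W) N) ?P)"
      unfolding tr_mult_minus tr_mult_idop[OF fin] expect by simp
    moreover have "0 \<le> tr W (outer \<psi>) - tr W ?P"
      using tr_extE_le[OF E fin VW \<psi>] psd_tr_nonneg[OF fin \<psi>] psd_tr_nonneg[OF fin P]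
      by (simp add: less_eq_complex_def)
    moreover have "0 \<le> tr W (mult W (minus_op (idop W) N) ?P)"
      by (rule tr_mult_psd_nonneg[OF fin N_psd(2) P])
    ultimately show "0 \<le> tr W (mult W (minus_op (idop W) ?M) (outer \<psi>))" by simp
  qed
  ultimately show ?thesis by (simp add: effects_def)
qed

section \<open>Refinement through Choi forms\<close>

definition expect_le :: "nat set \<Rightarrow> nat set \<Rightarrow> op \<Rightarrow> (op \<Rightarrow> op) \<Rightarrow> (op \<Rightarrow> op) \<Rightarrow> bool" where
  "expect_le V W N E F \<longleftrightarrow> (\<forall>X. finite X \<and> V \<union> W \<subseteq> X \<longrightarrow> (\<forall>\<rho>\<in>dens X.
     Re (tr X (mult X (extOp X W N) (extE X V E \<rho>))) \<le> Re (tr X (mult X (extOp X W N) (extE X V F \<rho>)))))"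

lemma expect_le_refl: "expect_le V W N E E"
  by (simp add: expect_le_def)

lemma sat_tot_wp_iff:
  assumes E: "dprog V E" and VW: "V \<subseteq> W"
  shows "sat_tot V F W (extE W V (adjoint V E) N) N \<longleftrightarrow> expect_le V W N E F"
  unfolding sat_tot_def expect_le_def using tr_mult_extOp_extE_adjoint[OF E _ VW] by auto

lemma sat_par_wlp_iff:
  assumes E: "dprog V E" and VW: "V \<subseteq> W"
  shows "sat_par V F W (minus_op (idop W) (extE W V (adjoint V E) N)) (minus_op (idop W) N)
    \<longleftrightarrow> expect_le V W N F E"
proof -
  have "Re (tr X (mult X (extOp X W (minus_op (idop W) (extE W V (adjoint V E) N))) \<rho>)) \<le>
      Re (tr X (mult X (extOp X W (minus_op (idop W) N)) (extE X V F \<rho>)))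
      + Re (tr X \<rho>) - Re (tr X (extE X V F \<rho>))
    \<longleftrightarrow> Re (tr X (mult X (extOp X W N) (extE X V F \<rho>))) \<le> Re (tr X (mult X (extOp X W N) (extE X V E \<rho>)))"
    if X: "finite X" "V \<union> W \<subseteq> X" for X \<rho>
  proof -
    have WX: "W \<subseteq> X" using X by auto
    show ?thesis
      unfolding tr_mult_extOp_compl[OF X(1) WX] tr_mult_extOp_extE_adjoint[OF E X(1) VW WX] by simp
  qed
  then show ?thesis unfolding sat_par_def expect_le_def by blast
qed

lemma sat_tot_mono:
  assumes E: "dprog V E" and F: "dprog V F"
    and choi_le: "\<And>G. Re (choi_form V E G) \<le> Re (choi_form V F G)"
    and N: "psd W N" and sat: "sat_tot V E W M N"
  shows "sat_tot V F W M N"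
  unfolding sat_tot_def
proof (intro allI impI ballI)
  fix X \<rho>
  assume X: "finite X \<and> V \<union> W \<subseteq> X" and \<rho>: "\<rho> \<in> dens X"
  have "Re (tr X (mult X (extOp X W M) \<rho>)) \<le> Re (tr X (mult X (extOp X W N) (extE X V E \<rho>)))"
    using sat X \<rho> by (simp add: sat_tot_def)
  also have "\<dots> \<le> Re (tr X (mult X (extOp X W N) (extE X V F \<rho>)))"
    using X \<rho> by (intro tr_mult_extE_mono[OF E F] choi_le psd_extOp[OF _ _ N]) (auto simp: dens_def)
  finally show "Re (tr X (mult X (extOp X W M) \<rho>)) \<le> Re (tr X (mult X (extOp X W N) (extE X V F \<rho>)))" .
qed

lemma sat_par_mono:
  assumes E: "dprog V E" and F: "dprog V F"
    and choi_le: "\<And>G. Re (choi_form V F G) \<le> Re (choi_form V E G)"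
    and N: "psd W (minus_op (idop W) N)" and sat: "sat_par V E W M N"
  shows "sat_par V F W M N"
  unfolding sat_par_def
proof (intro allI impI ballI)
  fix X \<rho>
  assume X: "finite X \<and> V \<union> W \<subseteq> X" and \<rho>: "\<rho> \<in> dens X"
  then have WX: "W \<subseteq> X" by auto
  have "Re (tr X (mult X (extOp X W (minus_op (idop W) N)) (extE X V F \<rho>))) \<le>
      Re (tr X (mult X (extOp X W (minus_op (idop W) N)) (extE X V E \<rho>)))"
    using X \<rho> by (intro tr_mult_extE_mono[OF F E] choi_le psd_extOp[OF _ _ N]) (auto simp: dens_def)
  then have "Re (tr X (extE X V F \<rho>)) - Re (tr X (mult X (extOp X W N) (extE X V F \<rho>))) \<le>
      Re (tr X (extE X V E \<rho>)) - Re (tr X (mult X (extOp X W N) (extE X V E \<rho>)))"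
    unfolding tr_mult_extOp_compl[OF conjunct1[OF X] WX] by simp
  moreover have "Re (tr X (mult X (extOp X W M) \<rho>)) \<le> Re (tr X (mult X (extOp X W N) (extE X V E \<rho>)))
      + Re (tr X \<rho>) - Re (tr X (extE X V E \<rho>))"
    using sat X \<rho> by (simp add: sat_par_def)
  ultimately show "Re (tr X (mult X (extOp X W M) \<rho>)) \<le> Re (tr X (mult X (extOp X W N) (extE X V F \<rho>)))
      + Re (tr X \<rho>) - Re (tr X (extE X V F \<rho>))"
    by linarith
qed

lemma leT_if_choi_form_le:
  assumes "dprog V E" "dprog V F" "\<And>G. Re (choi_form V E G) \<le> Re (choi_form V F G)"
  shows "leT V E F"
  using sat_tot_mono[OF assms] by (auto simp: leT_def effects_def)

lemma leP_if_choi_form_le: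
  assumes "dprog V E" "dprog V F" "\<And>G. Re (choi_form V F G) \<le> Re (choi_form V E G)"
  shows "leP V E F"
  using sat_par_mono[OF assms] by (auto simp: leP_def effects_def)

section \<open>The maximally entangled state\<close>

text \<open>An orthonormal family of \<open>card S\<close> vectors is complete: the defect
  \<open>Q = I - \<Sum>\<^sub>i |f\<^sub>i\<rangle>\<langle>f\<^sub>i|\<close> is hermitian with \<open>tr (Q Q) = card S - 2 card S + card S = 0\<close>.\<close>
lemma orthonormal_complete:
  fixes f :: "nat \<Rightarrow> 'a \<Rightarrow> complex"
  assumes fin: "finite S" and ortho: "\<And>i j. i < card S \<Longrightarrow> j < card S \<Longrightarrow>
      (\<Sum>s\<in>S. cnj (f i s) * f j s) = (if i = j then 1 else 0)"
    and p: "p \<in> S" and p': "p' \<in> S"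
  shows "(\<Sum>i<card S. f i p * cnj (f i p')) = (if p = p' then 1 else 0)"
proof -
  let ?n = "card S"
  define P where "P = (\<lambda>p p'. \<Sum>i<?n. f i p * cnj (f i p'))"
  define Q where "Q = (\<lambda>p p'. (if p = p' then 1 else 0) - P p p')"
  have Q_herm: "Q p' p = cnj (Q p p')" for p p'
    unfolding Q_def P_def by (simp add: mult.commute)
  have tr_P: "(\<Sum>p\<in>S. P p p) = of_nat ?n"
  proof -
    have "(\<Sum>p\<in>S. P p p) = (\<Sum>i<?n. \<Sum>p\<in>S. cnj (f i p) * f i p)"
      unfolding P_def by (subst sum.swap) (simp add: mult.commute)
    also have "\<dots> = (\<Sum>i<?n. 1)" by (intro sum.cong refl) (simp add: ortho)
    finally show ?thesis by simp
  qed
  have tr_PP: "(\<Sum>p\<in>S. \<Sum>p'\<in>S. P p p' * P p' p) = of_nat ?n"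
  proof -
    have "(\<Sum>p\<in>S. \<Sum>p'\<in>S. P p p' * P p' p) =
       (\<Sum>p\<in>S. \<Sum>p'\<in>S. \<Sum>i<?n. \<Sum>j<?n. (cnj (f i p) * f j p) * (cnj (f j p') * f i p'))"
      unfolding P_def by (simp add: sum_distrib_left sum_distrib_right mult_ac)
    also have "\<dots> = (\<Sum>i<?n. \<Sum>j<?n. (\<Sum>p\<in>S. cnj (f i p) * f j p) * (\<Sum>p'\<in>S. cnj (f j p') * f i p'))"
      by (subst sum_swap_pairs) (simp add: sum_product)
    also have "\<dots> = (\<Sum>i<?n. \<Sum>j<?n. (if i = j then 1 else 0))"
      by (intro sum.cong refl) (auto simp: ortho)
    finally show ?thesis by simp
  qed
  have deltas:
    "(\<Sum>p\<in>S. \<Sum>p'\<in>S. (if p = p' then 1 else 0) * (if p' = p then 1 else 0)) = (of_nat ?n :: complex)"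
    "(\<Sum>p\<in>S. \<Sum>p'\<in>S. (if p = p' then 1 else 0) * P p' p) = of_nat ?n"
    "(\<Sum>p\<in>S. \<Sum>p'\<in>S. P p p' * (if p' = p then 1 else 0)) = of_nat ?n"
    using fin tr_P by (simp_all add: if_distrib if_distribR sum.delta sum.delta' cong: if_cong)
  have "(\<Sum>p\<in>S. \<Sum>p'\<in>S. Q p p' * Q p' p) =
     (\<Sum>p\<in>S. \<Sum>p'\<in>S. (if p = p' then 1 else 0) * (if p' = p then 1 else 0))
     - (\<Sum>p\<in>S. \<Sum>p'\<in>S. (if p = p' then 1 else 0) * P p' p)
     - (\<Sum>p\<in>S. \<Sum>p'\<in>S. P p p' * (if p' = p then 1 else 0))
     + (\<Sum>p\<in>S. \<Sum>p'\<in>S. P p p' * P p' p)"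
    unfolding Q_def by (simp add: algebra_simps sum_subtractf sum.distrib)
  also have "\<dots> = 0" unfolding deltas tr_PP by simp
  finally have "(\<Sum>p\<in>S. \<Sum>p'\<in>S. Q p p' * cnj (Q p p')) = 0"
    by (subst (asm) Q_herm)
  then have "(\<Sum>p\<in>S. \<Sum>p'\<in>S. complex_of_real ((cmod (Q p p'))\<^sup>2)) = 0"
    by (simp only: complex_norm_square)
  then have "complex_of_real (\<Sum>p\<in>S. \<Sum>p'\<in>S. (cmod (Q p p'))\<^sup>2) = 0"
    by (simp only: of_real_sum)
  then have "(\<Sum>p\<in>S. \<Sum>p'\<in>S. (cmod (Q p p'))\<^sup>2) = 0"
    by (simp only: of_real_eq_0_iff)
  then have "(cmod (Q p p'))\<^sup>2 = 0"
    using fin p p' by (simp add: sum_nonneg sum_nonneg_eq_0_iff)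
  then show ?thesis unfolding Q_def P_def by (simp split: if_splits)
qed

locale max_entangled =
  fixes V V' :: "nat set" and b1 b2 :: "nat \<Rightarrow> vec"
  assumes finite_V: "finite V" and card_V': "card V' = card V" and finite_V': "finite V'"
    and disjoint: "V \<inter> V' = {}" and onb_b1: "onb V b1" and onb_b2: "onb V' b2"
begin

abbreviation "d \<equiv> (2::nat) ^ card V"
abbreviation "\<omega> \<equiv> omega_vec V V' b1 b2"
abbreviation "\<Omega> \<equiv> Omega V V' b1 b2"

lemma diff_V: "V \<union> V' - V = V'"
  using disjoint by blast

lemma finite_VV': "finite (V \<union> V')"
  using finite_V finite_V' by simp

lemma b1_orthonormal: "i < d \<Longrightarrow> j < d \<Longrightarrow> (\<Sum>s\<in>asg V. cnj (b1 i s) * b1 j s) = (if i = j then 1 else 0)"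
  using onb_b1 by (simp add: onb_def)

lemma b2_orthonormal: "i < d \<Longrightarrow> j < d \<Longrightarrow> (\<Sum>s\<in>asg V'. cnj (b2 i s) * b2 j s) = (if i = j then 1 else 0)"
  using onb_b2 card_V' by (simp add: onb_def)

lemma b1_complete:
  "p \<in> asg V \<Longrightarrow> p' \<in> asg V \<Longrightarrow> (\<Sum>i<d. b1 i p * cnj (b1 i p')) = (if p = p' then 1 else 0)"
  using orthonormal_complete[of "asg V" b1] b1_orthonormal finite_V by (simp add: card_asg)

lemma join_V_V':
  assumes "p \<in> asg V" "a \<in> asg V'"
  shows "join_asg V p a \<in> asg (V \<union> V')" "restr V (join_asg V p a) = p" "restr V' (join_asg V p a) = a"
  using assms join_in_asg[of p V a "V \<union> V'"] restr_join_right[of a "V \<union> V'" V p] by (simp_all add: diff_V)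

lemma omega_join:
  assumes "p \<in> asg V" "a \<in> asg V'"
  shows "\<omega> (join_asg V p a) = (\<Sum>i<d. b1 i p * b2 i a) / complex_of_real (sqrt d)"
  using join_V_V'[OF assms] by (simp add: omega_vec_def)

lemma omega_partial_trace:
  assumes p: "p \<in> asg V" and p': "p' \<in> asg V"
  shows "(\<Sum>a\<in>asg V'. cnj (\<omega> (join_asg V p a)) * \<omega> (join_asg V p' a)) = (if p = p' then 1 else 0) / of_nat d"
proof -
  have sqrt_d: "complex_of_real (sqrt (2 ^ card V)) * complex_of_real (sqrt (2 ^ card V)) = 2 ^ card V"
    by (simp flip: of_real_mult)
  have "(\<Sum>a\<in>asg V'. cnj (\<omega> (join_asg V p a)) * \<omega> (join_asg V p' a)) =
      (\<Sum>a\<in>asg V'. \<Sum>i<d. \<Sum>j<d. (cnj (b1 i p) * b1 j p') * (cnj (b2 i a) * b2 j a)) / of_nat d"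
    unfolding sum_divide_distrib using p p'
    by (intro sum.cong refl)
      (simp add: omega_join sum_distrib_left sum_distrib_right mult_ac sqrt_d flip: sum_divide_distrib)
  also have "\<dots> = (\<Sum>i<d. \<Sum>j<d. (cnj (b1 i p) * b1 j p') * (\<Sum>a\<in>asg V'. cnj (b2 i a) * b2 j a)) / of_nat d"
    by (subst sum.swap, rule arg_cong2[where f = "(/)"], rule sum.cong[OF refl], subst sum.swap)
      (simp_all add: sum_distrib_left)
  also have "\<dots> = (\<Sum>i<d. b1 i p' * cnj (b1 i p)) / of_nat d"
    by (simp add: b2_orthonormal if_distrib if_distribR sum.delta cong: if_cong) (simp add: mult.commute)
  finally show ?thesis using b1_complete[OF p' p] by auto
qed

lemma omega_norm: "(\<Sum>s\<in>asg (V \<union> V'). cnj (\<omega> s) * \<omega> s) = 1"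
proof -
  have "(\<Sum>s\<in>asg (V \<union> V'). cnj (\<omega> s) * \<omega> s) = (\<Sum>p\<in>asg V. 1 / of_nat d)"
    unfolding sum_asg_split[OF finite_VV', of V, simplified] diff_V
    by (intro sum.cong refl) (simp add: omega_partial_trace)
  then show ?thesis using finite_V by (simp add: card_asg)
qed

lemma Omega_eq_outer: "\<Omega> = outer \<omega>"
  by (simp add: Omega_def outer_def)

lemma Omega_effect: "\<Omega> \<in> effects (V \<union> V')"
proof -
  have supp: "\<And>s. s \<notin> asg (V \<union> V') \<Longrightarrow> \<omega> s = 0" by (simp add: omega_vec_def)
  show ?thesis
    unfolding effects_def Omega_eq_outer
    using psd_outer[OF supp] psd_idop_minus_outer[OF finite_VV' supp omega_norm] by simp
qed

lemma partial_inner_omega: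
  assumes p: "p \<in> asg V" and u: "u \<in> asg V"
  shows "partial_inner (V \<union> V') V \<omega> (\<lambda>s. if s \<in> asg (V \<union> V')
      then c * (\<Sum>p'\<in>asg V. G p' (restr V s) * \<omega> (join_asg V p' (restr V' s))) else 0) p u
    = c * G p u / of_nat d"
proof -
  have "partial_inner (V \<union> V') V \<omega> (\<lambda>s. if s \<in> asg (V \<union> V')
      then c * (\<Sum>p'\<in>asg V. G p' (restr V s) * \<omega> (join_asg V p' (restr V' s))) else 0) p u
    = (\<Sum>a\<in>asg V'. \<Sum>p'\<in>asg V. c * (G p' u * (cnj (\<omega> (join_asg V p a)) * \<omega> (join_asg V p' a))))"
    unfolding partial_inner_def diff_V using u
    by (intro sum.cong refl) (simp add: join_V_V' sum_distrib_left mult_ac)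
  also have "\<dots> = c * (\<Sum>p'\<in>asg V. G p' u * (\<Sum>a\<in>asg V'. cnj (\<omega> (join_asg V p a)) * \<omega> (join_asg V p' a)))"
    by (subst sum.swap) (simp add: sum_distrib_left)
  also have "\<dots> = c * G p u / of_nat d"
    using p finite_V by (simp add: omega_partial_trace if_distrib if_distribR sum.delta' cong: if_cong)
  finally show ?thesis .
qed

text \<open>The test state is \<open>|y\<rangle>\<langle>y|\<close> with \<open>y\<close> proportional to \<open>(G\<^sup>T \<otimes> I) |\<omega>\<rangle>\<close>; its expectation
  of \<open>\<Omega>\<close> after \<open>D\<close> is a positive multiple of the Choi form of \<open>D\<close> at \<open>G\<close>.\<close>
lemma choi_form_le_if_expect_le_Omega:
  assumes D1: "dprog V D1" and D2: "dprog V D2" and le: "expect_le V (V \<union> V') \<Omega> D1 D2"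
  shows "Re (choi_form V D1 G) \<le> Re (choi_form V D2 G)"
proof -
  let ?X = "V \<union> V'"
  define y where "y = (\<lambda>c s. if s \<in> asg ?X
    then c * (\<Sum>p'\<in>asg V. G p' (restr V s) * \<omega> (join_asg V p' (restr V' s))) else 0)"
  have supp: "\<And>s. s \<notin> asg ?X \<Longrightarrow> y c s = 0" for c by (simp add: y_def)
  define T where "T = Re (tr ?X (outer (y 1)))"
  have "0 \<le> tr ?X (outer (y 1))" by (rule psd_tr_nonneg[OF finite_VV' psd_outer[OF supp]])
  then have T_nonneg: "0 \<le> T" and T: "tr ?X (outer (y 1)) = complex_of_real T"
    by (auto simp: T_def less_eq_complex_def complex_eq_iff)
  define c where "c = 1 / sqrt (1 + T)"
  have c_pos: "c > 0" using T_nonneg by (simp add: c_def)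
  have "tr ?X (outer (y (complex_of_real c))) = complex_of_real (c * c) * tr ?X (outer (y 1))"
    by (simp add: y_def outer_def tr_def sum_distrib_left mult_ac)
  then have "Re (tr ?X (outer (y (complex_of_real c)))) = c * c * T"
    by (simp add: T)
  also have "\<dots> \<le> 1"
    using T_nonneg by (simp add: c_def field_simps flip: real_sqrt_mult)
  finally have dens: "outer (y (complex_of_real c)) \<in> dens ?X"
    using psd_outer[OF supp] by (simp add: dens_def)
  define k where "k = c / d"
  have expectation: "tr ?X (mult ?X (extOp ?X ?X \<Omega>) (extE ?X V D (outer (y (complex_of_real c))))) =
      complex_of_real (k * k) * choi_form V D G" if D: "dprog V D" for D
  proof -
    have "\<Omega> \<in> ops ?X" using Omega_effect by (simp add: effects_def psd_def)
    then have "tr ?X (mult ?X (extOp ?X ?X \<Omega>) (extE ?X V D (outer (y (complex_of_real c))))) =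
        quad_form (asg ?X) (extE ?X V D (outer (y (complex_of_real c)))) \<omega>"
      by (simp add: extOp_self Omega_eq_outer tr_mult_outer_left)
    also have "\<dots> = choi_form V D (partial_inner ?X V \<omega> (y (complex_of_real c)))"
      by (rule quad_form_extE_outer[OF D finite_VV']) simp
    also have "\<dots> = choi_form V D (\<lambda>p u. complex_of_real k * G p u)"
      by (rule choi_form_cong) (simp add: y_def partial_inner_omega k_def)
    finally show ?thesis by (simp add: choi_form_scale)
  qed
  have "Re (tr ?X (mult ?X (extOp ?X ?X \<Omega>) (extE ?X V D1 (outer (y (complex_of_real c)))))) \<le>
      Re (tr ?X (mult ?X (extOp ?X ?X \<Omega>) (extE ?X V D2 (outer (y (complex_of_real c))))))"
    by (rule le[unfolded expect_le_def, rule_format, OF _ dens]) (simp add: finite_V finite_V')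
  then have "k * k * Re (choi_form V D1 G) \<le> k * k * Re (choi_form V D2 G)"
    unfolding expectation[OF D1] expectation[OF D2] by simp
  moreover have "k * k > 0" using c_pos by (simp add: k_def)
  ultimately show ?thesis by (rule mult_left_le_imp_le)
qed

lemma leT_iff:
  assumes E: "dprog V E" and F: "dprog V F"
  shows "leT V E F \<longleftrightarrow> sat_tot V F (V \<union> V') (extE (V \<union> V') V (adjoint V E) \<Omega>) \<Omega>"
proof
  assume "leT V E F"
  moreover have "sat_tot V E (V \<union> V') (extE (V \<union> V') V (adjoint V E) \<Omega>) \<Omega>"
    by (simp add: sat_tot_wp_iff[OF E] expect_le_refl)
  ultimately show "sat_tot V F (V \<union> V') (extE (V \<union> V') V (adjoint V E) \<Omega>) \<Omega>"
    using effects_extE_adjoint[OF E finite_VV' _ Omega_effect] Omega_effect finite_VV'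
    by (simp add: leT_def)
next
  assume "sat_tot V F (V \<union> V') (extE (V \<union> V') V (adjoint V E) \<Omega>) \<Omega>"
  then have "expect_le V (V \<union> V') \<Omega> E F" by (simp add: sat_tot_wp_iff[OF E])
  then show "leT V E F"
    by (intro leT_if_choi_form_le[OF E F] choi_form_le_if_expect_le_Omega[OF E F])
qed

lemma leP_iff:
  assumes E: "dprog V E" and F: "dprog V F"
  shows "leP V E F \<longleftrightarrow> sat_par V F (V \<union> V')
    (minus_op (idop (V \<union> V')) (extE (V \<union> V') V (adjoint V E) \<Omega>)) (minus_op (idop (V \<union> V')) \<Omega>)"
proof
  assume "leP V E F"
  moreover have "sat_par V E (V \<union> V')
      (minus_op (idop (V \<union> V')) (extE (V \<union> V') V (adjoint V E) \<Omega>)) (minus_op (idop (V \<union> V')) \<Omega>)"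
    by (simp add: sat_par_wlp_iff[OF E] expect_le_refl)
  ultimately show "sat_par V F (V \<union> V')
      (minus_op (idop (V \<union> V')) (extE (V \<union> V') V (adjoint V E) \<Omega>)) (minus_op (idop (V \<union> V')) \<Omega>)"
    using effects_compl[OF effects_extE_adjoint[OF E finite_VV' _ Omega_effect]]
      effects_compl[OF Omega_effect] finite_VV'
    by (simp add: leP_def)
next
  assume "sat_par V F (V \<union> V')
      (minus_op (idop (V \<union> V')) (extE (V \<union> V') V (adjoint V E) \<Omega>)) (minus_op (idop (V \<union> V')) \<Omega>)"
  then have "expect_le V (V \<union> V') \<Omega> F E" by (simp add: sat_par_wlp_iff[OF E])
  then show "leP V E F"
    by (intro leP_if_choi_form_le[OF E F] choi_form_le_if_expect_le_Omega[OF F E])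
qed

end

theorem theorem4p3:
  fixes V V' :: "nat set" and E F :: "op \<Rightarrow> op" and b1 b2 :: "nat \<Rightarrow> vec"
  assumes "finite V" and "dprog V E" and "dprog V F"
    and "card V' = card V" and "finite V'" and "V \<inter> V' = {}"
    and "onb V b1" and "onb V' b2"
  shows "(leT V E F \<longleftrightarrow>
            sat_tot V F (V \<union> V') (extE (V \<union> V') V (adjoint V E) (Omega V V' b1 b2))
                       (Omega V V' b1 b2))
       \<and> (leP V E F \<longleftrightarrow>
            sat_par V F (V \<union> V')
              (minus_op (idop (V \<union> V')) (extE (V \<union> V') V (adjoint V E) (Omega V V' b1 b2)))
              (minus_op (idop (V \<union> V')) (Omega V V' b1 b2)))"
proof -
  interpret max_entangled V V' b1 b2
    using assms by unfold_locales
  show ?thesis using leT_iff[OF assms(2,3)] leP_iff[OF assms(2,3)] by blast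
qed

end
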